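(* Let $0<\theta<\tfrac12$, $\alpha>0$, $\beta\in\mathbb{R}$, and let $0\le\phi\le 1$ be smooth with compact support in $[1,2]$. Then $$\sum_{\ell\in\mathbb{Z}}|M_\theta(\tfrac12+i(\alpha\ell+\beta))|^2\phi\Big(\frac{\ell}{T}\Big)\ll T\log T.$$
   Context: $M_\theta(s)=\sum_{n\le T^{\theta}}\frac{\mu(n)}{n^s}\big(1-\frac{\log n}{\log T^{\theta}}\big)$ with $\mu$ the Möbius function. *)

theory Defs
  imports "HOL-Analysis.Analysis" "HOL-Computational_Algebra.Squarefree"
begin

definition moebius_mu :: "nat \<Rightarrow> int" where
  "moebius_mu n = (if n > 0 \<and> squarefree n then (-1) ^ card (prime_factors n) else 0)"

definition M_theta :: "real \<Rightarrow> real \<Rightarrow> complex \<Rightarrow> complex" where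
  "M_theta \<theta> T s = (\<Sum>n\<in>{1..nat \<lfloor>T powr \<theta>\<rfloor>}.
      of_int (moebius_mu n) / (of_nat n powr s)
      * complex_of_real (1 - ln (real n) / ln (T powr \<theta>)))"

definition smooth_fun :: "(real \<Rightarrow> real) \<Rightarrow> bool" where
  "smooth_fun f \<longleftrightarrow> (\<forall>k. ((deriv ^^ k) f) differentiable_on UNIV)"

end

theory Submission
  imports Defs
begin

(* The theorem is an instance of a discrete mean-value estimate for a short
   Dirichlet polynomial  P(t) = \<Sum>_{n\<le>N} b_n n^(-it)  with  |b_n| \<le> n^(-1/2),  sampled at
   the H points  t_j = \<alpha>(A + j) + \<beta>  of an arithmetic progression.  Expanding
   |P(t)|^2 = \<Sum>_{m,n} b_m b_n cos(t log(m/n)), the sum over j of each term is a sum of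
   cosines in arithmetic progression, bounded both by H and by 1/|sin(\<alpha> log(m/n)/2)|.
   Call (m,n) resonant when n lies within distance 1 of a point m e^(2\<pi>k/\<alpha>), k \<ge> 0.
   Resonant pairs contribute H each, but for fixed m their total weight n^(-1/2) is
   O(m^(-1/2)), giving O(H log N) overall; for non-resonant pairs the sine is of order at least 1/N, so
   they contribute O(N) each and O(N^2) in total after weighting by (mn)^(-1/2).

   Since N^2 \<le> T^(2\<theta>) \<le> T and log N \<le> log T,
   the bound O(H log N + N^2) is O(T log T). *)

section \<open>Sums of cosines in arithmetic progression\<close>

lemma cos_sum_telescope:
  fixes a x c :: real
  shows "2 * sin (x/2) * (\<Sum>j<H. cos ((a + real j) * x + c))
       = sin ((a + real H - 1/2) * x + c) - sin ((a - 1/2) * x + c)"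
proof (induction H)
  case 0 then show ?case by simp
next
  case (Suc H)
  have step: "2 * sin (x/2) * cos ((a + real H) * x + c)
        = sin ((a + real H + 1/2) * x + c) - sin ((a + real H - 1/2) * x + c)"
  proof -
    have 1: "(a + real H + 1/2) * x + c = ((a + real H) * x + c) + x/2" by (simp add: algebra_simps)
    have 2: "(a + real H - 1/2) * x + c = ((a + real H) * x + c) - x/2" by (simp add: algebra_simps)
    show ?thesis unfolding 1 2 sin_add sin_diff by (simp add: algebra_simps)
  qed
  have "2 * sin (x/2) * (\<Sum>j<Suc H. cos ((a + real j) * x + c))
       = 2 * sin (x/2) * (\<Sum>j<H. cos ((a + real j) * x + c)) + 2 * sin (x/2) * cos ((a + real H) * x + c)"
    by (simp add: algebra_simps)
  also have "\<dots> = sin ((a + real (Suc H) - 1/2) * x + c) - sin ((a - 1/2) * x + c)"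
    unfolding Suc step by (simp add: algebra_simps)
  finally show ?case .
qed

lemma cos_sum_sin_bound:
  fixes a x c :: real
  shows "\<bar>sin (x/2)\<bar> * \<bar>\<Sum>j<H. cos ((a + real j) * x + c)\<bar> \<le> 1"
proof -
  have "\<bar>2 * sin (x/2) * (\<Sum>j<H. cos ((a + real j) * x + c))\<bar> \<le> 2"
    unfolding cos_sum_telescope
    using abs_sin_le_one[of "(a + real H - 1/2) * x + c"] abs_sin_le_one[of "(a - 1/2) * x + c"]
    by linarith
  then show ?thesis by (simp add: abs_mult)
qed

lemma cos_sum_trivial_bound:
  fixes a x c :: real
  shows "\<bar>\<Sum>j<H. cos ((a + real j) * x + c)\<bar> \<le> real H"
proof -
  have "\<bar>\<Sum>j<H. cos ((a + real j) * x + c)\<bar> \<le> (\<Sum>j<H. \<bar>cos ((a + real j) * x + c)\<bar>)"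
    by (rule sum_abs)
  also have "\<dots> \<le> (\<Sum>j<H. 1)" by (intro sum_mono) simp
  finally show ?thesis by simp
qed

section \<open>Resonant pairs\<close>

lemma abs_sin_ge_third:
  fixes y :: real assumes "\<bar>y\<bar> \<le> 2"
  shows "\<bar>y\<bar> / 3 \<le> \<bar>sin y\<bar>"
proof -
  have taylor: "\<bar>sin y - (\<Sum>m<3. sin_coeff m * y ^ m)\<bar> \<le> inverse (fact 3) * \<bar>y\<bar> ^ 3"
    by (rule Maclaurin_sin_bound)
  have s3: "(\<Sum>m<3. sin_coeff m * y ^ m) = y"
    by (simp add: eval_nat_numeral sin_coeff_def)
  have f3: "inverse (fact 3 :: real) = 1/6" by (simp add: eval_nat_numeral)
  have h: "\<bar>sin y - y\<bar> \<le> \<bar>y\<bar> ^ 3 / 6" using taylor unfolding s3 f3 by simp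
  have "\<bar>y\<bar> ^ 3 = \<bar>y\<bar> * \<bar>y\<bar>^2" by (simp add: power3_eq_cube power2_eq_square)
  moreover have "\<bar>y\<bar>^2 \<le> 4" using power_mono[OF assms, of 2] by simp
  ultimately have "\<bar>y\<bar> ^ 3 \<le> \<bar>y\<bar> * 4" by (simp add: mult_left_mono)
  with h show ?thesis by linarith
qed

lemma ln_diff_ge_inv_max:
  fixes u v :: real assumes "0 < u" "0 < v" "1 \<le> \<bar>u - v\<bar>"
  shows "1 / max u v \<le> \<bar>ln u - ln v\<bar>"
proof (cases "v \<le> u")
  case True
  have "ln (v/u) \<le> v/u - 1" using assms by (intro ln_le_minus_one) simp
  then have "ln u - ln v \<ge> (u - v)/u" using assms by (simp add: ln_div field_simps)
  moreover have "(u - v)/u \<ge> 1/u" using assms True by (simp add: divide_right_mono)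
  ultimately show ?thesis using True assms by (simp add: max_def)
next
  case False
  have "ln (u/v) \<le> u/v - 1" using assms by (intro ln_le_minus_one) simp
  then have "ln v - ln u \<ge> (v - u)/v" using assms by (simp add: ln_div field_simps)
  moreover have "(v - u)/v \<ge> 1/v" using assms False by (simp add: divide_right_mono)
  ultimately show ?thesis using False assms by (simp add: max_def)
qed

lemma ln_gap_le_N:
  fixes y E :: real and n N :: nat
  assumes n: "1 \<le> n" "n \<le> N" and E: "E \<ge> 1"
    and y: "0 < y" "1 \<le> \<bar>real n - y\<bar>" "ln y \<le> ln (real n) + ln E"
  shows "1 / (real N * E) \<le> \<bar>ln (real n) - ln y\<bar>"
proof -
  have "ln y \<le> ln (real n * E)" using y n E by (simp add: ln_mult)
  then have "y \<le> real n * E" using y n E by simp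
  moreover have "real n \<le> real n * E" "real n * E \<le> real N * E" using n E by auto
  ultimately have "max (real n) y \<le> real N * E" by simp
  then have "1 / (real N * E) \<le> 1 / max (real n) y" using n by (intro divide_left_mono) auto
  also have "\<dots> \<le> \<bar>ln (real n) - ln y\<bar>" using ln_diff_ge_inv_max[of "real n" y] n y by simp
  finally show ?thesis .
qed

lemma abs_sin_add_nat_pi: "\<bar>sin (u + real k * pi)\<bar> = \<bar>sin u\<bar>"
  by (simp add: sin_add abs_mult)

(* (m,n) is resonant (with frequency spacing \<alpha>) if n is within distance 1 of one of the
   points m e^(2\<pi>k/\<alpha>), k \<le> K: there the phases \<alpha> log(n/m) are close to multiples of 2\<pi>
   and the cosine sums need not cancel. *)
definition resonant :: "real \<Rightarrow> nat \<Rightarrow> nat \<Rightarrow> nat \<Rightarrow> bool" where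
  "resonant \<alpha> K m n \<longleftrightarrow> (\<exists>k\<le>K. \<bar>real n - real m * exp (pi/\<alpha>) ^ (2*k)\<bar> < 1)"

(* Here k is the
   integer nearest to x = \<alpha> log(n/m)/(2\<pi>), and y = m e^(2\<pi>k/\<alpha>) the corresponding point. *)
lemma resonance_dichotomy:
  fixes \<alpha> :: real and N K m n :: nat
  assumes a: "\<alpha> > 0" and mn: "1 \<le> m" "m \<le> n" "n \<le> N"
    and K: "\<alpha> * (ln (real n) - ln (real m)) / (2*pi) + 1/2 \<le> real K"
  shows "resonant \<alpha> K m n \<or> \<alpha> / (6 * exp (pi/\<alpha>) * real N) \<le> \<bar>sin (\<alpha> * (ln (real n) - ln (real m)) / 2)\<bar>"
proof -
  define E where "E = exp (pi/\<alpha>)"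
  define x where "x = \<alpha> * (ln (real n) - ln (real m)) / (2*pi)"
  have E1: "E \<ge> 1" and x0: "x \<ge> 0" using a mn unfolding E_def x_def by (auto simp: divide_nonneg_pos)
  define k where "k = nat \<lfloor>x + 1/2\<rfloor>"
  have k_near: "\<bar>x - real k\<bar> \<le> 1/2" and "k \<le> K" using x0 K unfolding k_def x_def by linarith+
  define y where "y = real m * E ^ (2*k)"
  have y0: "y > 0" unfolding y_def using mn E1 by auto
  have ln_y: "ln y = ln (real m) + 2 * real k * (pi/\<alpha>)"
    unfolding y_def E_def using mn by (simp add: ln_mult ln_realpow)
  have phase: "\<alpha> * (ln (real n) - ln (real m)) / 2 = \<alpha> / 2 * (ln (real n) - ln y) + real k * pi"
    unfolding ln_y using a by (simp add: field_simps)
  have shifted: "\<alpha> / 2 * (ln (real n) - ln y) = pi * (x - real k)"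
    unfolding ln_y x_def using a by (simp add: field_simps)
  show ?thesis
  proof (cases "\<bar>real n - y\<bar> < 1")
    case True
    then show ?thesis unfolding resonant_def y_def E_def using \<open>k \<le> K\<close> by auto
  next
    case False
    have "pi * (- 1/2) \<le> pi * (x - real k)"
      using k_near by (intro mult_left_mono) (linarith, simp)
    then have "\<alpha> * (ln y - ln (real n)) \<le> pi"
      using shifted by (simp add: algebra_simps)
    then have "ln y \<le> ln (real n) + ln E"
      using a unfolding E_def by (simp add: field_simps)
    then have "1 / (real N * E) \<le> \<bar>ln (real n) - ln y\<bar>"
      using mn E1 y0 False by (intro ln_gap_le_N) auto
    then have "\<alpha> / 6 * (1 / (real N * E)) \<le> \<alpha> / 6 * \<bar>ln (real n) - ln y\<bar>"
      using a by (intro mult_left_mono) auto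
    moreover have "\<bar>\<alpha> / 2 * (ln (real n) - ln y)\<bar> / 3 = \<alpha> / 6 * \<bar>ln (real n) - ln y\<bar>"
      using a by (simp add: abs_mult)
    moreover have "\<alpha> / (6 * E * real N) = \<alpha> / 6 * (1 / (real N * E))" by simp
    ultimately have gap: "\<alpha> / (6 * E * real N) \<le> \<bar>\<alpha> / 2 * (ln (real n) - ln y)\<bar> / 3"
      by linarith
    have "pi * \<bar>x - real k\<bar> \<le> pi * (1/2)"
      using k_near by (intro mult_left_mono) auto
    moreover have "\<bar>pi * (x - real k)\<bar> = pi * \<bar>x - real k\<bar>" by (simp add: abs_mult)
    ultimately have "\<bar>\<alpha> / 2 * (ln (real n) - ln y)\<bar> \<le> 2"
      using pi_less_4 unfolding shifted by linarith
    from abs_sin_ge_third[OF this] gap show ?thesis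
      unfolding phase abs_sin_add_nat_pi E_def by linarith
  qed
qed

lemma cos_sum_ordered_pair_bound:
  fixes \<alpha> \<beta> A :: real and H N K m n :: nat
  assumes a: "\<alpha> > 0" and mn: "1 \<le> m" "m \<le> n" "n \<le> N"
    and K: "\<alpha> * ln (real N) / (2*pi) + 1/2 \<le> real K"
  shows "\<bar>\<Sum>j<H. cos ((\<alpha> * (A + real j) + \<beta>) * (ln (real n) - ln (real m)))\<bar>
     \<le> real H * (if resonant \<alpha> K m n then 1 else 0) + 6 * exp (pi/\<alpha>) / \<alpha> * real N"
proof -
  define d where "d = ln (real n) - ln (real m)"
  define S where "S = (\<Sum>j<H. cos ((\<alpha> * (A + real j) + \<beta>) * d))"
  have S_eq: "S = (\<Sum>j<H. cos ((A + real j) * (\<alpha> * d) + \<beta> * d))"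
    unfolding S_def by (intro sum.cong refl) (simp add: algebra_simps)
  have trivial: "\<bar>S\<bar> \<le> real H" unfolding S_eq by (rule cos_sum_trivial_bound)
  have by_sin: "\<bar>sin (\<alpha> * d / 2)\<bar> * \<bar>S\<bar> \<le> 1" unfolding S_eq by (rule cos_sum_sin_bound)
  have "0 \<le> ln (real m)" "ln (real n) \<le> ln (real N)" using mn by auto
  then have "\<alpha> * d / (2*pi) \<le> \<alpha> * ln (real N) / (2*pi)"
    using a unfolding d_def by (intro divide_right_mono mult_left_mono) auto
  then have "resonant \<alpha> K m n \<or> \<alpha> / (6 * exp (pi/\<alpha>) * real N) \<le> \<bar>sin (\<alpha> * d / 2)\<bar>"
    using resonance_dichotomy[OF a mn, of K] K unfolding d_def by linarith
  moreover have "0 \<le> 6 * exp (pi/\<alpha>) / \<alpha> * real N" using a by simp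
  moreover have "\<bar>S\<bar> \<le> 6 * exp (pi/\<alpha>) / \<alpha> * real N"
    if sin_large: "\<alpha> / (6 * exp (pi/\<alpha>) * real N) \<le> \<bar>sin (\<alpha> * d / 2)\<bar>"
  proof -
    have pos: "\<alpha> / (6 * exp (pi/\<alpha>) * real N) > 0" using a mn by simp
    have "\<alpha> / (6 * exp (pi/\<alpha>) * real N) * \<bar>S\<bar> \<le> 1"
      using by_sin mult_right_mono[OF sin_large abs_ge_zero[of S]] by linarith
    then have "\<bar>S\<bar> * (\<alpha> / (6 * exp (pi/\<alpha>) * real N)) \<le> 1" by (simp only: mult.commute)
    then have "\<bar>S\<bar> \<le> 1 / (\<alpha> / (6 * exp (pi/\<alpha>) * real N))"
      using pos_le_divide_eq[OF pos] by blast
    then show ?thesis using a by simp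
  qed
  ultimately show ?thesis using trivial unfolding S_def d_def by fastforce
qed

lemma cos_sum_pair_bound:
  fixes \<alpha> \<beta> A :: real and H N K m n :: nat
  assumes a: "\<alpha> > 0" and mn: "m \<in> {1..N}" "n \<in> {1..N}"
    and K: "\<alpha> * ln (real N) / (2*pi) + 1/2 \<le> real K"
  shows "\<bar>\<Sum>j<H. cos ((\<alpha> * (A + real j) + \<beta>) * (ln (real m) - ln (real n)))\<bar>
     \<le> real H * ((if resonant \<alpha> K m n then 1 else 0) + (if resonant \<alpha> K n m then 1 else 0))
        + 6 * exp (pi/\<alpha>) / \<alpha> * real N"
proof (cases "m \<le> n")
  case True
  have "cos (t * (ln (real m) - ln (real n))) = cos (t * (ln (real n) - ln (real m)))" for t
    by (metis cos_minus minus_diff_eq mult_minus_right)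
  then have "\<bar>\<Sum>j<H. cos ((\<alpha> * (A + real j) + \<beta>) * (ln (real m) - ln (real n)))\<bar>
      \<le> real H * (if resonant \<alpha> K m n then 1 else 0) + 6 * exp (pi/\<alpha>) / \<alpha> * real N"
    using cos_sum_ordered_pair_bound[where H=H and A=A and \<beta>=\<beta>, OF a _ True _ K] mn by simp
  moreover have "0 \<le> real H * (if resonant \<alpha> K n m then 1 else 0)" by simp
  ultimately show ?thesis unfolding distrib_left by linarith
next
  case False
  then have "\<bar>\<Sum>j<H. cos ((\<alpha> * (A + real j) + \<beta>) * (ln (real m) - ln (real n)))\<bar>
      \<le> real H * (if resonant \<alpha> K n m then 1 else 0) + 6 * exp (pi/\<alpha>) / \<alpha> * real N"
    using cos_sum_ordered_pair_bound[where m=n and n=m and H=H and A=A and \<beta>=\<beta>, OF a _ _ _ K] mn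
    by simp
  moreover have "0 \<le> real H * (if resonant \<alpha> K m n then 1 else 0)" by simp
  ultimately show ?thesis unfolding distrib_left by linarith
qed

lemma card_near_point:
  fixes y :: real assumes "y > 0"
  shows "card {n\<in>{1..N}. \<bar>real n - y\<bar> < 1} \<le> 2"
proof -
  have "{n\<in>{1..N}. \<bar>real n - y\<bar> < 1} \<subseteq> {nat \<lfloor>y\<rfloor>, nat \<lfloor>y\<rfloor> + 1}"
  proof
    fix n assume "n \<in> {n\<in>{1..N}. \<bar>real n - y\<bar> < 1}"
    then have h: "\<bar>real n - y\<bar> < 1" by simp
    have "of_int \<lfloor>y\<rfloor> \<le> y" "y < of_int \<lfloor>y\<rfloor> + 1" by linarith+
    then have "int n \<ge> \<lfloor>y\<rfloor>" "int n \<le> \<lfloor>y\<rfloor> + 1" using h by linarith+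
    then show "n \<in> {nat \<lfloor>y\<rfloor>, nat \<lfloor>y\<rfloor> + 1}" using assms by auto
  qed
  then have "card {n\<in>{1..N}. \<bar>real n - y\<bar> < 1} \<le> card {nat \<lfloor>y\<rfloor>, nat \<lfloor>y\<rfloor> + 1}"
    by (intro card_mono) auto
  also have "\<dots> \<le> 2" by simp
  finally show ?thesis .
qed

lemma geometric_sum_le:
  fixes q :: real assumes "0 \<le> q" "q < 1"
  shows "(\<Sum>k\<le>K. q ^ k) \<le> 1 / (1 - q)"
proof -
  have "(\<Sum>k\<le>K. q ^ k) = (\<Sum>k<Suc K. q ^ k)" by (simp add: lessThan_Suc_atMost)
  also have "\<dots> = (1 - q ^ Suc K) / (1 - q)" by (subst sum_gp_strict) (use assms in auto)
  also have "\<dots> \<le> 1 / (1 - q)" using assms by (intro divide_right_mono) auto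
  finally show ?thesis .
qed

definition resonance_const :: "real \<Rightarrow> real" where
  "resonance_const \<alpha> = 2 * sqrt 2 * (exp (pi/\<alpha>) / (exp (pi/\<alpha>) - 1))"

lemma resonance_const_nonneg: "\<alpha> > 0 \<Longrightarrow> resonance_const \<alpha> \<ge> 0"
  unfolding resonance_const_def by simp

(* For fixed m, the resonant n carry total weight \<Sum> n^(-1/2) = O(m^(-1/2)): the k-th
   resonance point y_k = m e^(2\<pi>k/\<alpha>) attracts at most two n, each of weight
   \<le> \<surd>2 y_k^(-1/2), and y_k^(-1/2) decays geometrically in k. *)
lemma resonant_weight_bound:
  fixes \<alpha> :: real and m N K :: nat
  assumes a: "\<alpha> > 0" and m: "m \<ge> 1"
  shows "(\<Sum>n\<in>{1..N}. (if resonant \<alpha> K m n then 1 else 0) / sqrt (real n))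
      \<le> resonance_const \<alpha> / sqrt (real m)"
proof -
  define E where "E = exp (pi/\<alpha>)"
  have E1: "E > 1" unfolding E_def using a by simp
  define y where "y k = real m * E ^ (2*k)" for k
  have y0: "y k > 0" for k unfolding y_def using m E1 by simp
  have sqrt_y: "sqrt (y k) = sqrt (real m) * E ^ k" for k
    unfolding y_def power_even_eq using E1 by (simp add: real_sqrt_mult)
  define g where "g n k = (if \<bar>real n - y k\<bar> < 1 then sqrt 2 / sqrt (y k) else 0)" for n k
  have g0: "g n k \<ge> 0" for n k unfolding g_def using y0[of k] by simp
  have pointwise: "(if resonant \<alpha> K m n then 1 else 0) / sqrt (real n) \<le> (\<Sum>k\<le>K. g n k)"
    if n: "n \<in> {1..N}" for n
  proof (cases "resonant \<alpha> K m n")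
    case True
    then obtain k where k: "k \<le> K" "\<bar>real n - y k\<bar> < 1" unfolding resonant_def y_def E_def by auto
    have "y k \<le> 2 * real n" using k n by auto
    then have "sqrt (y k) \<le> sqrt 2 * sqrt (real n)" by (simp flip: real_sqrt_mult)
    then have "1 / sqrt (real n) \<le> sqrt 2 / sqrt (y k)" using n y0[of k] by (simp add: field_simps)
    also have "\<dots> = g n k" unfolding g_def using k by simp
    also have "\<dots> \<le> (\<Sum>k\<le>K. g n k)" using k g0 by (intro member_le_sum) auto
    finally show ?thesis using True by simp
  qed (simp add: g0 sum_nonneg)
  have per_point: "(\<Sum>n\<in>{1..N}. g n k) \<le> 2 * sqrt 2 / sqrt (y k)" for k
  proof -
    have "(\<Sum>n\<in>{1..N}. g n k) = real (card {n\<in>{1..N}. \<bar>real n - y k\<bar> < 1}) * (sqrt 2 / sqrt (y k))"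
      unfolding g_def by (subst sum.inter_filter[symmetric]) auto
    also have "\<dots> \<le> 2 * (sqrt 2 / sqrt (y k))"
      using card_near_point[OF y0[of k], of N] y0[of k] by (intro mult_right_mono) auto
    finally show ?thesis by simp
  qed
  have "(\<Sum>n\<in>{1..N}. (if resonant \<alpha> K m n then 1 else 0) / sqrt (real n))
       \<le> (\<Sum>n\<in>{1..N}. \<Sum>k\<le>K. g n k)" by (intro sum_mono pointwise)
  also have "\<dots> = (\<Sum>k\<le>K. \<Sum>n\<in>{1..N}. g n k)" by (rule sum.swap)
  also have "\<dots> \<le> (\<Sum>k\<le>K. 2 * sqrt 2 / sqrt (y k))" by (intro sum_mono per_point)
  also have "\<dots> = 2 * sqrt 2 / sqrt (real m) * (\<Sum>k\<le>K. (1/E) ^ k)"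
    unfolding sqrt_y sum_distrib_left by (intro sum.cong refl) (simp add: power_divide)
  also have "\<dots> \<le> 2 * sqrt 2 / sqrt (real m) * (1 / (1 - 1/E))"
    using E1 by (intro mult_left_mono geometric_sum_le) auto
  also have "1 / (1 - 1/E) = E / (E - 1)" using E1 by (simp add: field_simps)
  finally show ?thesis unfolding E_def resonance_const_def by (simp add: mult.commute)
qed

(* Harmonic sums: H_N \<le> 1 + log N, since H_N - log N decreases. *)
lemma sum_inverse_le_1_plus_ln: "(\<Sum>m\<in>{1..N}. 1 / real m) \<le> 1 + ln (real N)"
proof (cases N)
  case 0 then show ?thesis by simp
next
  case (Suc n)
  have "harm (Suc n) - ln (real (Suc n)) \<le> harm (Suc 0) - ln (real (Suc 0))"
    using decseq_harm_diff_ln unfolding decseq_def by blast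
  moreover have "harm (Suc 0) = (1::real)" by (simp add: harm_def)
  ultimately have "harm (Suc n) \<le> 1 + ln (real (Suc n))" by simp
  then show ?thesis unfolding Suc harm_def by (simp add: divide_inverse)
qed

(* Each term 1/\<surd>(n+1) is at most 2(\<surd>(n+1) - \<surd>n), by the AM-GM inequality. *)
lemma sum_inverse_sqrt_le: "(\<Sum>m\<in>{1..N}. 1 / sqrt (real m)) \<le> 2 * sqrt (real N)"
proof (induction N)
  case 0 then show ?case by simp
next
  case (Suc n)
  have amgm: "sqrt (real n * real (Suc n)) \<le> (real n + real (Suc n)) / 2"
    by (rule arith_geo_mean_sqrt) auto
  have "1 \<le> 2 * real (Suc n) - 2 * sqrt (real n * real (Suc n))" using amgm by simp
  also have "2 * real (Suc n) = 2 * (sqrt (real (Suc n)) * sqrt (real (Suc n)))"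
    by (simp only: real_sqrt_mult_self abs_of_nat)
  also have "sqrt (real n * real (Suc n)) = sqrt (real n) * sqrt (real (Suc n))"
    by (simp add: real_sqrt_mult)
  finally have "1 \<le> (2 * sqrt (real (Suc n)) - 2 * sqrt (real n)) * sqrt (real (Suc n))"
    by (simp add: algebra_simps)
  then have "1 / sqrt (real (Suc n)) \<le> 2 * sqrt (real (Suc n)) - 2 * sqrt (real n)"
    by (simp add: divide_le_eq)
  then show ?case using Suc.IH by simp
qed

section \<open>A mean-value estimate for short Dirichlet polynomials\<close>

definition dirichlet_poly :: "(nat \<Rightarrow> real) \<Rightarrow> nat \<Rightarrow> real \<Rightarrow> complex" where
  "dirichlet_poly b N t = (\<Sum>n\<in>{1..N}. complex_of_real (b n) * cis (- (t * ln (real n))))"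

lemma norm_dirichlet_poly_squared:
  "(cmod (dirichlet_poly b N t))\<^sup>2 =
     (\<Sum>m\<in>{1..N}. \<Sum>n\<in>{1..N}. b m * b n * cos (t * (ln (real m) - ln (real n))))"
proof -
  have "(cmod (dirichlet_poly b N t))\<^sup>2 =
     (\<Sum>n\<in>{1..N}. b n * cos (t * ln (real n)))\<^sup>2 + (\<Sum>n\<in>{1..N}. b n * sin (t * ln (real n)))\<^sup>2"
    unfolding cmod_power2 dirichlet_poly_def by (simp add: sum_negf power2_eq_square)
  also have "\<dots> = (\<Sum>m\<in>{1..N}. \<Sum>n\<in>{1..N}. b m * b n * cos (t * (ln (real m) - ln (real n))))"
    unfolding power2_eq_square sum_product sum.distrib[symmetric] right_diff_distrib cos_diff
    by (intro sum.cong refl) (simp add: algebra_simps)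
  finally show ?thesis .
qed

lemma resonant_double_sum_bound:
  fixes S :: "nat \<Rightarrow> nat \<Rightarrow> real" and H C \<alpha> :: real and N K :: nat
  assumes a: "\<alpha> > 0" and H0: "H \<ge> 0" and C0: "C \<ge> 0"
    and bnd: "\<And>m n. m \<in> {1..N} \<Longrightarrow> n \<in> {1..N} \<Longrightarrow>
       \<bar>S m n\<bar> \<le> H * ((if resonant \<alpha> K m n then 1 else 0) + (if resonant \<alpha> K n m then 1 else 0)) + C * real N"
  shows "(\<Sum>m\<in>{1..N}. \<Sum>n\<in>{1..N}. \<bar>S m n\<bar> / (sqrt (real m) * sqrt (real n)))
     \<le> 2 * H * resonance_const \<alpha> * (1 + ln (real N)) + C * real N * (4 * real N)"
proof -
  define c where "c = resonance_const \<alpha>"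
  define i where "i m n = (if resonant \<alpha> K m n then 1 else (0::real))" for m n
  define w where "w m n = 1 / (sqrt (real m) * sqrt (real n))" for m n
  define R where "R = (\<Sum>m\<in>{1..N}. \<Sum>n\<in>{1..N}. i m n * w m n)"
  define R' where "R' = (\<Sum>m\<in>{1..N}. \<Sum>n\<in>{1..N}. i n m * w m n)"
  define W where "W = (\<Sum>m\<in>{1..N}. \<Sum>n\<in>{1..N}. w m n)"
  have "(\<Sum>m\<in>{1..N}. \<Sum>n\<in>{1..N}. \<bar>S m n\<bar> / (sqrt (real m) * sqrt (real n)))
     \<le> (\<Sum>m\<in>{1..N}. \<Sum>n\<in>{1..N}. (H * (i m n + i n m) + C * real N) * w m n)"
    unfolding w_def i_def using bnd by (intro sum_mono) (simp add: divide_right_mono)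
  also have "\<dots> = H * R + H * R' + C * real N * W"
    unfolding R_def R'_def W_def sum_distrib_left sum.distrib[symmetric]
    by (intro sum.cong refl) (simp add: algebra_simps)
  also have "R' = R" unfolding R'_def R_def w_def by (subst sum.swap) (simp add: mult.commute)
  finally have split: "(\<Sum>m\<in>{1..N}. \<Sum>n\<in>{1..N}. \<bar>S m n\<bar> / (sqrt (real m) * sqrt (real n)))
      \<le> 2 * (H * R) + C * real N * W" by simp
  have "R = (\<Sum>m\<in>{1..N}. (1 / sqrt (real m)) * (\<Sum>n\<in>{1..N}. i m n / sqrt (real n)))"
    unfolding R_def w_def sum_distrib_left by (intro sum.cong refl) simp
  also have "\<dots> \<le> (\<Sum>m\<in>{1..N}. (1 / sqrt (real m)) * (c / sqrt (real m)))"
    using resonant_weight_bound[OF a] unfolding i_def c_def by (intro sum_mono mult_left_mono) auto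
  also have "\<dots> = c * (\<Sum>m\<in>{1..N}. 1 / real m)"
    unfolding sum_distrib_left by (intro sum.cong refl) simp
  also have "\<dots> \<le> c * (1 + ln (real N))"
    unfolding c_def by (intro mult_left_mono sum_inverse_le_1_plus_ln resonance_const_nonneg[OF a])
  finally have R_bound: "H * R \<le> H * (c * (1 + ln (real N)))" using H0 by (rule mult_left_mono)
  have "W = (\<Sum>m\<in>{1..N}. 1 / sqrt (real m)) * (\<Sum>n\<in>{1..N}. 1 / sqrt (real n))"
    unfolding W_def w_def sum_product by simp
  also have "\<dots> \<le> (2 * sqrt (real N)) * (2 * sqrt (real N))"
    using sum_inverse_sqrt_le[of N] by (intro mult_mono) (auto intro: sum_nonneg)
  finally have "W \<le> 4 * real N" by simp
  then have W_bound: "C * real N * W \<le> C * real N * (4 * real N)" using C0 by (intro mult_left_mono) auto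
  show ?thesis using split R_bound W_bound unfolding c_def by (simp add: algebra_simps)
qed

theorem dirichlet_poly_mean_value:
  fixes \<alpha> \<beta> A :: real and b :: "nat \<Rightarrow> real" and H N :: nat
  assumes a: "\<alpha> > 0" and b: "\<And>n. n \<in> {1..N} \<Longrightarrow> \<bar>b n\<bar> \<le> 1 / sqrt (real n)"
  shows "(\<Sum>j<H. (cmod (dirichlet_poly b N (\<alpha> * (A + real j) + \<beta>)))\<^sup>2)
    \<le> 2 * real H * resonance_const \<alpha> * (1 + ln (real N)) + 6 * exp (pi/\<alpha>) / \<alpha> * real N * (4 * real N)"
proof -
  define K where "K = nat \<lceil>\<alpha> * ln (real N) / (2*pi) + 1/2\<rceil>"
  have K: "\<alpha> * ln (real N) / (2*pi) + 1/2 \<le> real K" unfolding K_def by linarith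
  define t where "t j = \<alpha> * (A + real j) + \<beta>" for j
  define S where "S m n = (\<Sum>j<H. cos (t j * (ln (real m) - ln (real n))))" for m n
  have "(\<Sum>j<H. (cmod (dirichlet_poly b N (t j)))\<^sup>2)
      = (\<Sum>j<H. \<Sum>m\<in>{1..N}. \<Sum>n\<in>{1..N}. b m * b n * cos (t j * (ln (real m) - ln (real n))))"
    unfolding norm_dirichlet_poly_squared ..
  also have "\<dots> = (\<Sum>m\<in>{1..N}. \<Sum>n\<in>{1..N}. b m * b n * S m n)"
    unfolding S_def sum_distrib_left by (subst sum.swap) (auto intro: sum.cong sum.swap)
  also have "\<dots> \<le> (\<Sum>m\<in>{1..N}. \<Sum>n\<in>{1..N}. \<bar>S m n\<bar> / (sqrt (real m) * sqrt (real n)))"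
  proof (intro sum_mono)
    fix m n assume m: "m \<in> {1..N}" and n: "n \<in> {1..N}"
    have "b m * b n * S m n \<le> \<bar>b m\<bar> * \<bar>b n\<bar> * \<bar>S m n\<bar>" by (simp add: abs_mult[symmetric])
    also have "\<dots> \<le> (1 / sqrt (real m)) * (1 / sqrt (real n)) * \<bar>S m n\<bar>"
      using b[OF m] b[OF n] by (intro mult_mono mult_right_mono) auto
    finally show "b m * b n * S m n \<le> \<bar>S m n\<bar> / (sqrt (real m) * sqrt (real n))" by simp
  qed
  also have "\<dots> \<le> 2 * real H * resonance_const \<alpha> * (1 + ln (real N))
       + 6 * exp (pi/\<alpha>) / \<alpha> * real N * (4 * real N)"
  proof (rule resonant_double_sum_bound[where K=K, OF a])
    fix m n assume "m \<in> {1..N}" "n \<in> {1..N}"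
    then show "\<bar>S m n\<bar> \<le> real H * ((if resonant \<alpha> K m n then 1 else 0) + (if resonant \<alpha> K n m then 1 else 0))
        + 6 * exp (pi/\<alpha>) / \<alpha> * real N"
      unfolding S_def t_def by (rule cos_sum_pair_bound[OF a _ _ K])
  qed (use a in auto)
  finally show ?thesis unfolding t_def .
qed

section \<open>The mollifier on the critical line\<close>

definition mollifier_coeff :: "real \<Rightarrow> real \<Rightarrow> nat \<Rightarrow> real" where
  "mollifier_coeff \<theta> T n = of_int (moebius_mu n) * (1 - ln (real n) / ln (T powr \<theta>)) / sqrt (real n)"

lemma nat_powr_critical_line:
  assumes "n \<ge> 1"
  shows "(of_nat n :: complex) powr (Complex (1/2) t) = complex_of_real (sqrt (real n)) * cis (t * ln (real n))"
proof -
  have "(of_nat n :: complex) powr (Complex (1/2) t) = exp (Complex (1/2) t * of_real (ln (real n)))"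
    using assms by (simp add: powr_def)
  also have "\<dots> = exp (ln (real n) / 2) * cis (t * ln (real n))"
    by (subst exp_eq_polar) simp
  also have "exp (ln (real n) / 2) = sqrt (real n)"
    using assms by (simp add: powr_half_sqrt[symmetric] powr_def)
  finally show ?thesis by simp
qed

lemma M_theta_eq_dirichlet_poly:
  "M_theta \<theta> T (Complex (1/2) t) = dirichlet_poly (mollifier_coeff \<theta> T) (nat \<lfloor>T powr \<theta>\<rfloor>) t"
  unfolding M_theta_def dirichlet_poly_def
proof (rule sum.cong[OF refl])
  fix n assume "n \<in> {1..nat \<lfloor>T powr \<theta>\<rfloor>}"
  then have n: "n \<ge> 1" by simp
  then have "sqrt (real n) > 0" by simp
  then show "of_int (moebius_mu n) / of_nat n powr Complex (1 / 2) t * complex_of_real (1 - ln (real n) / ln (T powr \<theta>))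
        = complex_of_real (mollifier_coeff \<theta> T n) * cis (- (t * ln (real n)))"
    unfolding nat_powr_critical_line[OF n] mollifier_coeff_def
    by (simp add: field_simps cis_neq_zero flip: cis_inverse)
qed

lemma abs_moebius_mu_le_1: "\<bar>real_of_int (moebius_mu n)\<bar> \<le> 1"
  unfolding moebius_mu_def by (auto simp: abs_mult)

(* The smoothing weight 1 - log n / log T^\<theta> lies in [0,1] for n \<le> T^\<theta>. *)
lemma mollifier_coeff_bound:
  assumes T: "T > 1" and th: "\<theta> > 0" and n: "n \<in> {1..nat \<lfloor>T powr \<theta>\<rfloor>}"
  shows "\<bar>mollifier_coeff \<theta> T n\<bar> \<le> 1 / sqrt (real n)"
proof -
  have n1: "n \<ge> 1" using n by simp
  have "real n \<le> of_int \<lfloor>T powr \<theta>\<rfloor>" using n by auto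
  also have "\<dots> \<le> T powr \<theta>" by simp
  finally have "ln (real n) \<le> ln (T powr \<theta>)" using n1 T by (subst ln_le_cancel_iff) auto
  moreover have "ln (real n) \<ge> 0" "ln (T powr \<theta>) > 0" using n1 T th by auto
  ultimately have w: "0 \<le> 1 - ln (real n) / ln (T powr \<theta>)" "1 - ln (real n) / ln (T powr \<theta>) \<le> 1"
    by (simp_all add: divide_le_eq_1)
  have "\<bar>mollifier_coeff \<theta> T n\<bar>
      = \<bar>real_of_int (moebius_mu n)\<bar> * (1 - ln (real n) / ln (T powr \<theta>)) / sqrt (real n)"
    unfolding mollifier_coeff_def using w by (simp add: abs_mult)
  also have "\<dots> \<le> 1 * 1 / sqrt (real n)"
    using abs_moebius_mu_le_1[of n] w by (intro divide_right_mono mult_mono) auto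
  finally show ?thesis by simp
qed

(* A weight 0 \<le> \<phi> \<le> 1 supported in [1,2] restricts the sum over \<int> to the integers in
   [T, 2T], i.e. to a window of consecutive integers starting at \<lceil>T\<rceil>. *)
lemma window_reduction:
  fixes g :: "int \<Rightarrow> real" and \<phi> :: "real \<Rightarrow> real" and T :: real
  assumes T: "T > 0" and g: "\<And>l. g l \<ge> 0" and \<phi>: "\<And>x. 0 \<le> \<phi> x \<and> \<phi> x \<le> 1"
    and supp: "closure {x. \<phi> x \<noteq> 0} \<subseteq> {1..2}"
  shows "(\<Sum>\<^sub>\<infinity>l\<in>(UNIV::int set). g l * \<phi> (of_int l / T))
      \<le> (\<Sum>j<nat (\<lfloor>2*T\<rfloor> - \<lceil>T\<rceil> + 1). g (\<lceil>T\<rceil> + int j))"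
proof -
  define H where "H = nat (\<lfloor>2*T\<rfloor> - \<lceil>T\<rceil> + 1)"
  define L where "L = (\<lambda>j. \<lceil>T\<rceil> + int j) ` {..<H}"
  have outside: "g l * \<phi> (of_int l / T) = 0" if "l \<notin> L" for l
  proof (rule ccontr)
    assume "g l * \<phi> (of_int l / T) \<noteq> 0"
    then have "of_int l / T \<in> closure {x. \<phi> x \<noteq> 0}" by (intro subsetD[OF closure_subset]) simp
    then have "T \<le> of_int l" "of_int l \<le> 2 * T" using supp T by (auto simp: field_simps)
    then have "\<lceil>T\<rceil> \<le> l" "l \<le> \<lfloor>2*T\<rfloor>" by (auto simp: ceiling_le_iff le_floor_iff)
    then have "nat (l - \<lceil>T\<rceil>) \<in> {..<H}" "l = \<lceil>T\<rceil> + int (nat (l - \<lceil>T\<rceil>))" unfolding H_def by auto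
    with that show False unfolding L_def by blast
  qed
  have "(\<Sum>\<^sub>\<infinity>l\<in>(UNIV::int set). g l * \<phi> (of_int l / T)) = (\<Sum>l\<in>L. g l * \<phi> (of_int l / T))"
    using outside by (subst infsum_cong_neutral[where T = L]) (auto simp: L_def)
  also have "\<dots> = (\<Sum>j<H. g (\<lceil>T\<rceil> + int j) * \<phi> (of_int (\<lceil>T\<rceil> + int j) / T))"
    unfolding L_def by (rule sum.reindex_cong[OF _ refl refl]) (auto simp: inj_on_def)
  also have "\<dots> \<le> (\<Sum>j<H. g (\<lceil>T\<rceil> + int j))"
    using g \<phi> by (intro sum_mono mult_left_le) auto
  finally show ?thesis unfolding H_def .
qed

lemma mean_value_bound_le_T_ln_T:
  fixes T c C H N :: real
  assumes T: "T \<ge> exp 1" and c: "c \<ge> 0" and C: "C \<ge> 0"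
    and H: "0 \<le> H" "H \<le> T + 1" and N: "N * N \<le> T" and lnN: "0 \<le> 1 + ln N" "ln N \<le> ln T"
  shows "2 * H * c * (1 + ln N) + C * N * (4 * N) \<le> (8 * c + 4 * C) * (T * ln T)"
proof -
  have T1: "T \<ge> 1" using T one_le_exp_iff[of 1] by linarith
  have lT: "ln T \<ge> 1" using T ln_exp[of 1] ln_mono[of "exp 1" T] by simp
  have "2 * H * c * (1 + ln N) \<le> 2 * (T + 1) * c * (1 + ln T)"
    using H c lnN by (intro mult_mono) auto
  also have "\<dots> \<le> 2 * (2 * T) * c * (2 * ln T)"
    using T1 lT c by (intro mult_mono) auto
  finally have "2 * H * c * (1 + ln N) \<le> 8 * c * (T * ln T)" by simp
  moreover have "C * N * (4 * N) \<le> 4 * C * (T * ln T)"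
  proof -
    have "C * N * (4 * N) = 4 * C * (N * N)" by simp
    also have "\<dots> \<le> 4 * C * (T * ln T)"
    proof -
      have "T \<le> T * ln T" using mult_left_mono[OF lT, of T] T1 by simp
      then show ?thesis using N C by (intro mult_left_mono) auto
    qed
    finally show ?thesis .
  qed
  ultimately show ?thesis by (simp add: algebra_simps)
qed

lemma mollifier_window_bound:
  fixes \<theta> \<alpha> \<beta> T :: real and \<phi> :: "real \<Rightarrow> real"
  assumes T: "T \<ge> exp 1" and th: "0 < \<theta>" "\<theta> \<le> 1/2" and a: "\<alpha> > 0"
    and \<phi>: "\<And>x. 0 \<le> \<phi> x \<and> \<phi> x \<le> 1" and supp: "closure {x. \<phi> x \<noteq> 0} \<subseteq> {1..2}"
  shows "(\<Sum>\<^sub>\<infinity>l\<in>(UNIV::int set).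
            (cmod (M_theta \<theta> T (Complex (1/2) (\<alpha> * of_int l + \<beta>))))\<^sup>2 * \<phi> (of_int l / T))
      \<le> (8 * resonance_const \<alpha> + 4 * (6 * exp (pi/\<alpha>) / \<alpha>)) * (T * ln T)"
proof -
  have T1: "T > 1" using T exp_gt_one[of 1] by linarith
  define N where "N = nat \<lfloor>T powr \<theta>\<rfloor>"
  define H where "H = nat (\<lfloor>2*T\<rfloor> - \<lceil>T\<rceil> + 1)"
  have "real N = of_int \<lfloor>T powr \<theta>\<rfloor>" unfolding N_def by simp
  then have NT: "real N \<le> T powr \<theta>" by linarith
  have "T powr \<theta> \<le> T" using powr_mono[of \<theta> 1 T] T1 th by simp
  have "(\<Sum>\<^sub>\<infinity>l\<in>(UNIV::int set).
            (cmod (M_theta \<theta> T (Complex (1/2) (\<alpha> * of_int l + \<beta>))))\<^sup>2 * \<phi> (of_int l / T))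
      \<le> (\<Sum>j<H. (cmod (dirichlet_poly (mollifier_coeff \<theta> T) N (\<alpha> * (of_int \<lceil>T\<rceil> + real j) + \<beta>)))\<^sup>2)"
    using window_reduction[where T=T and
        g="\<lambda>l. (cmod (dirichlet_poly (mollifier_coeff \<theta> T) N (\<alpha> * of_int l + \<beta>)))\<^sup>2", OF _ _ \<phi> supp] T1
    unfolding H_def N_def M_theta_eq_dirichlet_poly by (simp add: algebra_simps)
  also have "\<dots> \<le> 2 * real H * resonance_const \<alpha> * (1 + ln (real N))
      + 6 * exp (pi/\<alpha>) / \<alpha> * real N * (4 * real N)"
    using mollifier_coeff_bound[OF T1 th(1)] unfolding N_def by (intro dirichlet_poly_mean_value[OF a])
  also have "\<dots> \<le> (8 * resonance_const \<alpha> + 4 * (6 * exp (pi/\<alpha>) / \<alpha>)) * (T * ln T)"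
  proof (rule mean_value_bound_le_T_ln_T[OF T resonance_const_nonneg[OF a]])
    have "real_of_int (\<lfloor>2*T\<rfloor> - \<lceil>T\<rceil> + 1) \<le> T + 1" by linarith
    then show "real H \<le> T + 1" unfolding H_def using T1 by linarith
    have "real N * real N \<le> T powr \<theta> * T powr \<theta>" using NT by (intro mult_mono) auto
    also have "\<dots> = T powr (2*\<theta>)" by (simp add: powr_add[symmetric])
    also have "\<dots> \<le> T" using powr_mono[of "2*\<theta>" 1 T] T1 th by simp
    finally show "real N * real N \<le> T" .
    show "0 \<le> 1 + ln (real N)" by (cases "N = 0") auto
    show "ln (real N) \<le> ln T" using NT \<open>T powr \<theta> \<le> T\<close> T1 by (cases "N = 0") auto
  qed (use a in \<open>auto simp: H_def\<close>)
  finally show ?thesis .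
qed

(* The main theorem: the bound of mollifier_window_bound holds for all T \<ge> e, and the sum
   is non-negative. *)
theorem mainTheorem9:
  fixes \<theta> \<alpha> \<beta> :: real and \<phi> :: "real \<Rightarrow> real"
  assumes "0 < \<theta>" "\<theta> < 1/2" "\<alpha> > 0"
    and "smooth_fun \<phi>"
    and "\<And>x. 0 \<le> \<phi> x \<and> \<phi> x \<le> 1"
    and "closure {x. \<phi> x \<noteq> 0} \<subseteq> {1..2}"
  shows "(\<lambda>T. \<Sum>\<^sub>\<infinity>l\<in>(UNIV::int set).
            (cmod (M_theta \<theta> T (Complex (1/2) (\<alpha> * of_int l + \<beta>))))\<^sup>2 * \<phi> (of_int l / T))
         \<in> O(\<lambda>T. T * ln T)"
proof (rule bigoI)
  define c where "c = 8 * resonance_const \<alpha> + 4 * (6 * exp (pi/\<alpha>) / \<alpha>)"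
  show "\<forall>\<^sub>F T in at_top. norm (\<Sum>\<^sub>\<infinity>l\<in>(UNIV::int set).
            (cmod (M_theta \<theta> T (Complex (1/2) (\<alpha> * of_int l + \<beta>))))\<^sup>2 * \<phi> (of_int l / T))
          \<le> c * norm (T * ln T)"
    using eventually_ge_at_top[of "exp 1"]
  proof eventually_elim
    case (elim T)
    have "T \<ge> 1" using elim one_le_exp_iff[of 1] by linarith
    then have "T * ln T \<ge> 0" by simp
    moreover have "(\<Sum>\<^sub>\<infinity>l\<in>(UNIV::int set).
            (cmod (M_theta \<theta> T (Complex (1/2) (\<alpha> * of_int l + \<beta>))))\<^sup>2 * \<phi> (of_int l / T)) \<ge> 0"
      using assms(5) by (intro infsum_nonneg) auto
    ultimately show ?case
      using mollifier_window_bound[OF elim assms(1) _ assms(3,5,6), of \<beta>] assms(2)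
      unfolding c_def by simp
  qed
qed

end
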